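(* If $A,B\in\mathcal{D}$ and $d(A)<d(B)$, then there exists $D\in\mathcal{D}$ such that $A\subseteq D\subseteq A\cup B$ and $d(D)=d(B)$.
   Context: $\mathbb{N}=\{1,2,3,\dots\}$. For $A\subseteq\mathbb{N}$ let $A(n)=|A\cap[1,n]|$. Let $\mathcal{D}$ be the collection of all $A\subseteq\mathbb{N}$ for which the asymptotic density $d(A)=\lim_{n\to\infty}\frac{A(n)}{n}$ exists. *)

theory Defs
  imports Complex_Main
begin

text \<open>Counting function A(n) = |A \<inter> [1,n]|. Subsets of the positive naturals
  are modelled as nat sets not containing 0.\<close>
definition counting :: "nat set \<Rightarrow> nat \<Rightarrow> nat" where
  "counting A n = card (A \<inter> {1..n})"

definition has_density :: "nat set \<Rightarrow> real \<Rightarrow> bool" where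
  "has_density A \<delta> \<longleftrightarrow> ((\<lambda>n. real (counting A n) / real n) \<longlongrightarrow> \<delta>) sequentially"

definition density_sets :: "nat set set" where
  "density_sets = {A. A \<subseteq> {1..} \<and> (\<exists>\<delta>. has_density A \<delta>)}"

definition density :: "nat set \<Rightarrow> real" where
  "density A = lim (\<lambda>n. real (counting A n) / real n)"

end

theory Submission
  imports Defs
begin

text \<open>Build D greedily: it takes every element of A, and takes an element k of B exactly
  when its count so far is still below \<open>d(B) k\<close>. If an element of B was last taken at m,
  then \<open>D(n) \<le> d(B) m + 1 + (A(n) - A(m)) \<le> d(B) n + o(n)\<close> because \<open>d(A) \<le> d(B)\<close>; if an
  element of B was last refused at m, then \<open>D(n) \<ge> d(B) m + (B(n) - B(m)) = d(B) n - o(n)\<close>.\<close>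

lemma error_bound_of_tendsto_div:
  fixes f :: "nat \<Rightarrow> real"
  assumes lim: "(\<lambda>n. f n / real n) \<longlonglongrightarrow> c" and e: "e > 0"
  shows "\<exists>K. \<forall>n. \<bar>f n - c * real n\<bar> \<le> e * real n + K"
proof -
  obtain N where N: "\<And>n. n \<ge> N \<Longrightarrow> \<bar>f n / real n - c\<bar> < e"
    using LIMSEQ_D[OF lim e] by auto
  define M where "M = max N 1"
  define K where "K = (\<Sum>k<M. \<bar>f k - c * real k\<bar>)"
  have K_nonneg: "K \<ge> 0"
    unfolding K_def by (intro sum_nonneg) auto
  have "\<bar>f n - c * real n\<bar> \<le> e * real n + K" for n
  proof (cases "n < M")
    case True
    then have "\<bar>f n - c * real n\<bar> \<le> K"
      unfolding K_def by (intro member_le_sum) auto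
    then show ?thesis using e by (simp add: add_increasing)
  next
    case False
    then have n: "n \<ge> N" "real n > 0" unfolding M_def by auto
    have "\<bar>f n - c * real n\<bar> = \<bar>f n / real n - c\<bar> * real n"
      using n(2) by (simp add: abs_mult[symmetric] field_simps)
    also have "\<dots> \<le> e * real n"
      using N[OF n(1)] n(2) by (intro mult_right_mono) auto
    finally show ?thesis using K_nonneg by linarith
  qed
  then show ?thesis using K_nonneg by blast
qed

lemma tendsto_div_of_error_bound:
  fixes f :: "nat \<Rightarrow> real"
  assumes bound: "\<And>e. e > 0 \<Longrightarrow> \<exists>K. \<forall>n. \<bar>f n - c * real n\<bar> \<le> e * real n + K"
  shows "(\<lambda>n. f n / real n) \<longlonglongrightarrow> c"
proof (rule LIMSEQ_I)
  fix r :: real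
  assume r: "r > 0"
  define e where "e = r / 2"
  have e: "e > 0" using r by (simp add: e_def)
  obtain K where K: "\<And>n. \<bar>f n - c * real n\<bar> \<le> e * real n + K"
    using bound[OF e] by blast
  obtain N :: nat where N: "real N > K / e"
    using reals_Archimedean2 by blast
  have "norm (f n / real n - c) < r" if n: "n \<ge> Suc N" for n
  proof -
    have n_pos: "real n > 0" using n by simp
    have "K < e * real N"
      using N e by (simp add: field_simps)
    also have "\<dots> \<le> e * real n"
      using n e by (intro mult_left_mono) auto
    finally have "K < e * real n" .
    have "norm (f n / real n - c) = \<bar>f n - c * real n\<bar> / real n"
      using n_pos by (simp add: field_simps abs_div_pos[symmetric] del: abs_div_pos)
    also have "\<dots> \<le> (e * real n + K) / real n"
      using n_pos K by (intro divide_right_mono) auto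
    also have "\<dots> < (2 * e * real n) / real n"
      using n_pos \<open>K < e * real n\<close> by (intro divide_strict_right_mono) auto
    also have "\<dots> = r" using n_pos by (simp add: e_def)
    finally show ?thesis .
  qed
  then show "\<exists>N. \<forall>n\<ge>N. norm (f n / real n - c) < r" by blast
qed

lemma increment_bound:
  fixes f :: "nat \<Rightarrow> real"
  assumes bound: "\<And>n. \<bar>f n - c * real n\<bar> \<le> e * real n + K"
    and e: "e \<ge> 0" and "m \<le> n"
  shows "\<bar>f n - f m - c * (real n - real m)\<bar> \<le> 2 * e * real n + 2 * K"
proof -
  have "e * real m \<le> e * real n" using e \<open>m \<le> n\<close> by (simp add: mult_left_mono)
  then show ?thesis using bound[of m] bound[of n] by (simp add: abs_le_iff algebra_simps)
qed

lemma density_eq: "has_density S c \<Longrightarrow> density S = c"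
  unfolding has_density_def density_def by (rule limI)

lemma counting_0 [simp]: "counting S 0 = 0"
  by (simp add: counting_def)

lemma counting_Suc: "counting S (Suc n) = counting S n + (if Suc n \<in> S then 1 else 0)"
proof -
  have "S \<inter> {1..Suc n} = (if Suc n \<in> S then insert (Suc n) (S \<inter> {1..n}) else S \<inter> {1..n})"
    using le_Suc_eq by auto
  then show ?thesis unfolding counting_def by simp
qed

fun greedy_count :: "nat set \<Rightarrow> nat set \<Rightarrow> real \<Rightarrow> nat \<Rightarrow> nat" where
  "greedy_count A B \<beta> 0 = 0"
| "greedy_count A B \<beta> (Suc n) = greedy_count A B \<beta> n +
     (if Suc n \<in> A \<or> (Suc n \<in> B \<and> real (greedy_count A B \<beta> n) < \<beta> * real (Suc n)) then 1 else 0)"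

definition greedy_set :: "nat set \<Rightarrow> nat set \<Rightarrow> real \<Rightarrow> nat set" where
  "greedy_set A B \<beta> =
     {k. 1 \<le> k \<and> (k \<in> A \<or> (k \<in> B \<and> real (greedy_count A B \<beta> (k - 1)) < \<beta> * real k))}"

lemma counting_greedy_set: "counting (greedy_set A B \<beta>) n = greedy_count A B \<beta> n"
  by (induction n) (simp_all add: counting_Suc greedy_set_def)

lemma greedy_set_bounds:
  assumes "A \<subseteq> {1..}"
  shows "A \<subseteq> greedy_set A B \<beta>" "greedy_set A B \<beta> \<subseteq> A \<union> B" "greedy_set A B \<beta> \<subseteq> {1..}"
  using assms by (auto simp: greedy_set_def)

lemma greedy_count_last_taken:
  "\<exists>m\<le>n. real (greedy_count A B \<beta> n) \<le> \<beta> * real m + 1 + real (counting A n) - real (counting A m)"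
proof (induction n)
  case 0
  then show ?case by simp
next
  case (Suc n)
  then obtain m where m: "m \<le> n"
    "real (greedy_count A B \<beta> n) \<le> \<beta> * real m + 1 + real (counting A n) - real (counting A m)"
    by blast
  consider "Suc n \<in> A" | "Suc n \<notin> A" "Suc n \<in> B" "real (greedy_count A B \<beta> n) < \<beta> * real (Suc n)"
    | "\<not> (Suc n \<in> A \<or> (Suc n \<in> B \<and> real (greedy_count A B \<beta> n) < \<beta> * real (Suc n)))"
    by blast
  then show ?case
  proof cases
    case 2
    then show ?thesis by (intro exI[of _ "Suc n"]) (auto simp: counting_Suc)
  qed (use m in \<open>auto intro!: exI[of _ m] simp: counting_Suc\<close>)
qed

lemma greedy_count_last_refused:
  "\<exists>m\<le>n. real (greedy_count A B \<beta> n) \<ge> \<beta> * real m + real (counting B n) - real (counting B m)"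
proof (induction n)
  case 0
  then show ?case by simp
next
  case (Suc n)
  then obtain m where m: "m \<le> n"
    "real (greedy_count A B \<beta> n) \<ge> \<beta> * real m + real (counting B n) - real (counting B m)"
    by blast
  consider "Suc n \<in> A \<or> (Suc n \<in> B \<and> real (greedy_count A B \<beta> n) < \<beta> * real (Suc n))"
    | "\<not> (Suc n \<in> A \<or> (Suc n \<in> B \<and> real (greedy_count A B \<beta> n) < \<beta> * real (Suc n)))" "Suc n \<in> B"
    | "\<not> (Suc n \<in> A \<or> (Suc n \<in> B \<and> real (greedy_count A B \<beta> n) < \<beta> * real (Suc n)))" "Suc n \<notin> B"
    by blast
  then show ?case
  proof cases
    case 2
    then show ?thesis by (intro exI[of _ "Suc n"]) (auto simp: counting_Suc)
  qed (use m in \<open>auto intro!: exI[of _ m] simp: counting_Suc\<close>)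
qed

lemma greedy_count_error_bound:
  assumes A: "\<And>n. \<bar>real (counting A n) - \<alpha> * real n\<bar> \<le> e * real n + KA"
    and B: "\<And>n. \<bar>real (counting B n) - \<beta> * real n\<bar> \<le> e * real n + KB"
    and "\<alpha> \<le> \<beta>" and "e \<ge> 0"
  shows "\<bar>real (greedy_count A B \<beta> n) - \<beta> * real n\<bar> \<le> 2 * e * real n + 2 * (KA + KB) + 1"
proof -
  have "KA \<ge> 0" "KB \<ge> 0" using A[of 0] B[of 0] by simp_all
  obtain m where m: "m \<le> n"
    "real (greedy_count A B \<beta> n) \<le> \<beta> * real m + 1 + real (counting A n) - real (counting A m)"
    using greedy_count_last_taken by blast
  have "\<alpha> * (real n - real m) \<le> \<beta> * (real n - real m)"
    using \<open>\<alpha> \<le> \<beta>\<close> m(1) by (intro mult_right_mono) auto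
  then have upper: "real (greedy_count A B \<beta> n) \<le> \<beta> * real n + 2 * e * real n + 2 * KA + 1"
    using m(2) increment_bound[OF A \<open>e \<ge> 0\<close> m(1)] by (simp add: abs_le_iff algebra_simps)
  obtain m' where m': "m' \<le> n"
    "real (greedy_count A B \<beta> n) \<ge> \<beta> * real m' + real (counting B n) - real (counting B m')"
    using greedy_count_last_refused by blast
  have lower: "real (greedy_count A B \<beta> n) \<ge> \<beta> * real n - 2 * e * real n - 2 * KB"
    using m'(2) increment_bound[OF B \<open>e \<ge> 0\<close> m'(1)] by (simp add: abs_le_iff algebra_simps)
  show ?thesis using upper lower \<open>KA \<ge> 0\<close> \<open>KB \<ge> 0\<close> by (simp add: abs_le_iff)
qed

lemma has_density_greedy_set:
  assumes A: "has_density A \<alpha>" and B: "has_density B \<beta>" and "\<alpha> \<le> \<beta>"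
  shows "has_density (greedy_set A B \<beta>) \<beta>"
  unfolding has_density_def counting_greedy_set
proof (rule tendsto_div_of_error_bound)
  fix e :: real
  assume "e > 0"
  then have e: "e / 2 > 0" by simp
  obtain KA where KA: "\<And>n. \<bar>real (counting A n) - \<alpha> * real n\<bar> \<le> e / 2 * real n + KA"
    using error_bound_of_tendsto_div[OF A[unfolded has_density_def] e] by blast
  obtain KB where KB: "\<And>n. \<bar>real (counting B n) - \<beta> * real n\<bar> \<le> e / 2 * real n + KB"
    using error_bound_of_tendsto_div[OF B[unfolded has_density_def] e] by blast
  have "\<bar>real (greedy_count A B \<beta> n) - \<beta> * real n\<bar> \<le> e * real n + (2 * (KA + KB) + 1)" for n
    using greedy_count_error_bound[OF KA KB \<open>\<alpha> \<le> \<beta>\<close>, of n] e by simp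
  then show "\<exists>K. \<forall>n. \<bar>real (greedy_count A B \<beta> n) - \<beta> * real n\<bar> \<le> e * real n + K" by blast
qed

theorem corollary3p6:
  assumes "A \<in> density_sets" and "B \<in> density_sets"
    and "density A < density B"
  shows "\<exists>D \<in> density_sets. A \<subseteq> D \<and> D \<subseteq> A \<union> B \<and> density D = density B"
proof -
  obtain \<alpha> \<beta> where A: "has_density A \<alpha>" and B: "has_density B \<beta>" and A_pos: "A \<subseteq> {1..}"
    using assms(1,2) by (auto simp: density_sets_def)
  have "\<alpha> \<le> \<beta>"
    using assms(3) density_eq[OF A] density_eq[OF B] by simp
  then have D: "has_density (greedy_set A B \<beta>) \<beta>"
    using has_density_greedy_set[OF A B] by blast
  show ?thesis
  proof (intro bexI conjI)
    show "greedy_set A B \<beta> \<in> density_sets"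
      using D greedy_set_bounds(3)[OF A_pos] by (auto simp: density_sets_def)
    show "density (greedy_set A B \<beta>) = density B"
      using density_eq[OF D] density_eq[OF B] by simp
  qed (use greedy_set_bounds[OF A_pos] in auto)
qed

end
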